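(* Let $(N,J,h)$ be a 2-dimensional almost Norden manifold of constant sectional curvature $k'$ and let $(\mathcal{C}(N),\varphi,\xi,\eta,g)$ be the cone over it (constructed as in the context). Then for $(\mathcal{C}(N),\varphi,\xi,\eta,g)$: (1) the sectional curvatures of all non-degenerate $\xi$-sections vanish; (2) $\tau^*=0$; (3) $\tau^{**}=\tau$.
   Context: An almost Norden manifold $(N,J,h)$ is a manifold $N$ with an almost complex structure $J$ and a pseudo-Riemannian metric $h$ satisfying $h(Jx,Jy)=-h(x,y)$; constant sectional curvature $k'$ means its curvature tensor is $R'(x,y,z,w)=k'\{h(y,z)h(x,w)-h(x,z)h(y,w)\}$. The cone is $\mathcal{C}(N)=\mathbb{R}^+\times N$, $t$ the coordinate on $\mathbb{R}^+=(0,\infty)$, with metric $g=t^2h+\mathrm{d}t^2$ and structure $\xi=\tfrac{\mathrm{d}}{\mathrm{d}t}$, $\eta=\mathrm{d}t$, $\varphi=J$ on vectors tangent to $N$, $\varphi\xi=0$. Let $\nabla$ be the Levi-Civita connection of $g$, $R(x,y)=\nabla_x\nabla_y-\nabla_y\nabla_x-\nabla_{[x,y]}$, $R(x,y,z,w)=g(R(x,y)z,w)$. For a basis $\{e_i\}$ with $(g^{ij})$ the inverse of $(g(e_i,e_j))$ (summation convention): $\rho(y,z)=g^{ij}R(e_i,y,z,e_j)$, $\rho^*(y,z)=g^{ij}R(e_i,y,z,\varphi e_j)$, $\tau=g^{ij}\rho(e_i,e_j)$, $\tau^*=g^{ij}\rho^*(e_i,e_j)$, $\tau^{**}=g^{ij}\rho^*(e_i,\varphi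 e_j)$. The sectional curvature of a non-degenerate 2-plane $\alpha$ with orthogonal basis $\{x,y\}$ is $k(\alpha)=R(x,y,y,x)/(g(x,x)g(y,y))$; $\alpha$ is a $\xi$-section if $\xi\in\alpha$. *)

theory Defs
  imports "HOL-Analysis.Analysis"
begin

text \<open>Local-coordinate (chart) calculus. Points of a chart are vectors in real^'n,
  tensors are given by their components in the coordinate frame e_i = axis i 1.\<close>

definition pd :: "'n::finite \<Rightarrow> (real^'n \<Rightarrow> real) \<Rightarrow> real^'n \<Rightarrow> real" where
  "pd i f x = frechet_derivative f (at x) (axis i 1)"

fun iter_pd :: "'n::finite list \<Rightarrow> (real^'n \<Rightarrow> real) \<Rightarrow> real^'n \<Rightarrow> real" where
  "iter_pd [] f = f"
| "iter_pd (i # is) f = pd i (iter_pd is f)"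

definition smooth_fun :: "(real^'n::finite) set \<Rightarrow> (real^'n \<Rightarrow> real) \<Rightarrow> bool" where
  "smooth_fun U f \<longleftrightarrow> (\<forall>is. \<forall>x\<in>U. iter_pd is f differentiable (at x))"

definition bil :: "real^'n^'n \<Rightarrow> real^'n \<Rightarrow> real^'n \<Rightarrow> real" where
  "bil A X Y = X \<bullet> (A *v Y)"

text \<open>Christoffel symbols of the Levi-Civita connection:
  nabla_(e_i) e_j = sum_k Gamma^k_ij e_k.\<close>
definition christoffel :: "(real^'n \<Rightarrow> real^'n^'n) \<Rightarrow> real^'n \<Rightarrow> 'n::finite \<Rightarrow> 'n \<Rightarrow> 'n \<Rightarrow> real" where
  "christoffel g x k i j =
     (\<Sum>l\<in>UNIV. matrix_inv (g x) $ k $ l *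
        (pd i (\<lambda>y. g y $ j $ l) x + pd j (\<lambda>y. g y $ i $ l) x - pd l (\<lambda>y. g y $ i $ j) x)) / 2"

text \<open>Components of R(x,y) = nabla_x nabla_y - nabla_y nabla_x - nabla_[x,y]:
  R(e_i,e_j) e_k = sum_l R^l_ijk e_l.\<close>
definition curv_comp :: "(real^'n \<Rightarrow> real^'n^'n) \<Rightarrow> real^'n \<Rightarrow> 'n::finite \<Rightarrow> 'n \<Rightarrow> 'n \<Rightarrow> 'n \<Rightarrow> real" where
  "curv_comp g x i j k l =
     pd i (\<lambda>y. christoffel g y l j k) x - pd j (\<lambda>y. christoffel g y l i k) x
     + (\<Sum>m\<in>UNIV. christoffel g x l i m * christoffel g x m j k
                 - christoffel g x l j m * christoffel g x m i k)"

definition curv4 :: "(real^'n \<Rightarrow> real^'n^'n) \<Rightarrow> real^'n \<Rightarrow> real^'n \<Rightarrow> real^'n \<Rightarrow> real^'n \<Rightarrow> real^'n::finite \<Rightarrow> real" where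
  "curv4 g x X Y Z W =
     (\<Sum>i\<in>UNIV. \<Sum>j\<in>UNIV. \<Sum>k\<in>UNIV. \<Sum>l\<in>UNIV. \<Sum>m\<in>UNIV.
        X $ i * Y $ j * Z $ k * W $ m * curv_comp g x i j k l * g x $ l $ m)"

definition rho :: "(real^'n \<Rightarrow> real^'n^'n) \<Rightarrow> real^'n \<Rightarrow> real^'n \<Rightarrow> real^'n::finite \<Rightarrow> real" where
  "rho g x Y Z = (\<Sum>i\<in>UNIV. \<Sum>j\<in>UNIV. matrix_inv (g x) $ i $ j * curv4 g x (axis i 1) Y Z (axis j 1))"

definition rho_star :: "(real^'n \<Rightarrow> real^'n^'n) \<Rightarrow> (real^'n \<Rightarrow> real^'n^'n) \<Rightarrow> real^'n \<Rightarrow> real^'n \<Rightarrow> real^'n::finite \<Rightarrow> real" where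
  "rho_star g Phi x Y Z = (\<Sum>i\<in>UNIV. \<Sum>j\<in>UNIV. matrix_inv (g x) $ i $ j * curv4 g x (axis i 1) Y Z (Phi x *v axis j 1))"

definition tau :: "(real^'n \<Rightarrow> real^'n^'n) \<Rightarrow> real^'n::finite \<Rightarrow> real" where
  "tau g x = (\<Sum>i\<in>UNIV. \<Sum>j\<in>UNIV. matrix_inv (g x) $ i $ j * rho g x (axis i 1) (axis j 1))"

definition tau_star :: "(real^'n \<Rightarrow> real^'n^'n) \<Rightarrow> (real^'n \<Rightarrow> real^'n^'n) \<Rightarrow> real^'n::finite \<Rightarrow> real" where
  "tau_star g Phi x = (\<Sum>i\<in>UNIV. \<Sum>j\<in>UNIV. matrix_inv (g x) $ i $ j * rho_star g Phi x (axis i 1) (axis j 1))"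

definition tau_star_star :: "(real^'n \<Rightarrow> real^'n^'n) \<Rightarrow> (real^'n \<Rightarrow> real^'n^'n) \<Rightarrow> real^'n::finite \<Rightarrow> real" where
  "tau_star_star g Phi x = (\<Sum>i\<in>UNIV. \<Sum>j\<in>UNIV. matrix_inv (g x) $ i $ j * rho_star g Phi x (axis i 1) (Phi x *v axis j 1))"

definition almost_norden_chart :: "(real^'n) set \<Rightarrow> (real^'n \<Rightarrow> real^'n^'n) \<Rightarrow> (real^'n \<Rightarrow> real^'n^'n) \<Rightarrow> bool" where
  "almost_norden_chart U J h \<longleftrightarrow>
     open U \<and>
     (\<forall>i j. smooth_fun U (\<lambda>x. h x $ i $ j) \<and> smooth_fun U (\<lambda>x. J x $ i $ j)) \<and>
     (\<forall>x\<in>U. transpose (h x) = h x \<and> invertible (h x)) \<and>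
     (\<forall>x\<in>U. J x ** J x = - mat 1) \<and>
     (\<forall>x\<in>U. \<forall>X Y. bil (h x) (J x *v X) (J x *v Y) = - bil (h x) X Y)"

definition const_sect_curv :: "(real^'n) set \<Rightarrow> (real^'n \<Rightarrow> real^'n^'n::finite) \<Rightarrow> real \<Rightarrow> bool" where
  "const_sect_curv U h k' \<longleftrightarrow>
     (\<forall>x\<in>U. \<forall>X Y Z W. curv4 h x X Y Z W
        = k' * (bil (h x) Y Z * bil (h x) X W - bil (h x) X Z * bil (h x) Y W))"

text \<open>Cone chart: coordinates (t, u) with index Inl () for t and Inr i for u_i.\<close>
definition cone_base :: "real^(unit + 'n::finite) \<Rightarrow> real^'n" where
  "cone_base P = (\<chi> i. P $ Inr i)"

definition cone_t :: "real^(unit + 'n::finite) \<Rightarrow> real" where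
  "cone_t P = P $ Inl ()"

definition cone_domain :: "(real^'n::finite) set \<Rightarrow> (real^(unit + 'n)) set" where
  "cone_domain U = {P. cone_t P > 0 \<and> cone_base P \<in> U}"

definition cone_metric :: "(real^'n \<Rightarrow> real^'n^'n) \<Rightarrow> real^(unit + 'n::finite) \<Rightarrow> real^(unit + 'n)^(unit + 'n)" where
  "cone_metric h P = (\<chi> a b. case (a, b) of
       (Inl _, Inl _) \<Rightarrow> 1
     | (Inr i, Inr j) \<Rightarrow> (cone_t P)^2 * h (cone_base P) $ i $ j
     | _ \<Rightarrow> 0)"

definition cone_phi :: "(real^'n \<Rightarrow> real^'n^'n) \<Rightarrow> real^(unit + 'n::finite) \<Rightarrow> real^(unit + 'n)^(unit + 'n)" where
  "cone_phi J P = (\<chi> a b. case (a, b) of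
       (Inr i, Inr j) \<Rightarrow> J (cone_base P) $ i $ j
     | _ \<Rightarrow> 0)"

definition cone_xi :: "real^(unit + 'n::finite)" where
  "cone_xi = axis (Inl ()) 1"

end

theory Submission
  imports Defs
begin

text \<open>In the chart (t, u) the cone metric is diag(1, t^2 h). Its Christoffel symbols are those
  of h together with Gamma^t_jk = -t h_jk and Gamma^l_tk = Gamma^l_kt = delta^l_k / t. Consequently
  R^l_ijk = R(h)^l_ijk - delta^l_i h_jk + delta^l_j h_ik on indices tangent to N, and every component
  with an index t vanishes (for R^t_ijk this is the compatibility of h with its connection).
  If h has constant curvature k', then
  R(X,Y,Z,W) = t^2 (k' - 1) (h(Y',Z') h(X',W') - h(X',Z') h(Y',W')), where X' is the N-component of X.
  A xi-section has linearly dependent N-components, so its curvature vanishes. Contracting with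
  g^ij = diag(1, h^ij / t^2) gives, for dim N = n,
  tau = n (n - 1) (k' - 1) / t^2, tau* = (n - 1) (k' - 1) tr J / t^2 and tau** = (k' - 1) ((tr J)^2 + n) / t^2;
  finally J^2 = -1 forces tr J = 0 when n = 2.\<close>

section \<open>Partial derivatives in a chart\<close>

lemma pd_eq_derivative: "(f has_derivative D) (at x) \<Longrightarrow> pd i f x = D (axis i 1)"
  unfolding pd_def using frechet_derivative_at by metis

lemma pd_cong_open:
  assumes "open S" "x \<in> S" "\<And>y. y \<in> S \<Longrightarrow> f y = g y"
  shows "pd i f x = pd i g x"
proof -
  have "\<And>D. (f has_derivative D) (at x) \<longleftrightarrow> (g has_derivative D) (at x)"
    using has_derivative_transform_within_open[OF _ assms(1,2)] assms(3) by metis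
  then show ?thesis unfolding pd_def frechet_derivative_def by simp
qed

lemma differentiable_cong_open:
  assumes "open S" "x \<in> S" "\<And>y. y \<in> S \<Longrightarrow> f y = g y" "g differentiable (at x)"
  shows "f differentiable (at x)"
proof -
  obtain D where "(g has_derivative D) (at x)" using assms(4) unfolding differentiable_def by blast
  then have "(f has_derivative D) (at x)"
    by (rule has_derivative_transform_within_open[OF _ assms(1,2)]) (simp add: assms(3))
  then show ?thesis unfolding differentiable_def by blast
qed

lemmas has_derivative_frechet_derivative = frechet_derivative_works[THEN iffD1]

lemma pd_const [simp]: "pd i (\<lambda>y. c) x = 0"
  by (rule pd_eq_derivative[where D="\<lambda>v. 0"]) (rule has_derivative_const)

lemma pd_minus: "f differentiable (at x) \<Longrightarrow> pd i (\<lambda>y. - f y) x = - pd i f x"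
  unfolding pd_def[of i f]
  by (rule pd_eq_derivative, intro has_derivative_minus has_derivative_frechet_derivative)

lemma pd_mult:
  "f differentiable (at x) \<Longrightarrow> g differentiable (at x) \<Longrightarrow>
   pd i (\<lambda>y. f y * g y) x = f x * pd i g x + pd i f x * g x"
  unfolding pd_def[of i f] pd_def[of i g]
  by (rule pd_eq_derivative, intro has_derivative_mult has_derivative_frechet_derivative)

section \<open>Finite sums and matrix algebra\<close>

lemma matrix_inv_right: "invertible A \<Longrightarrow> A ** matrix_inv A = mat 1"
  and matrix_inv_left: "invertible A \<Longrightarrow> matrix_inv A ** A = mat 1"
  unfolding invertible_def matrix_inv_def
  using someI_ex[of "\<lambda>A'. A ** A' = mat 1 \<and> A' ** A = mat 1"] by blast+

lemma matrix_inv_eqI: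
  fixes A :: "'a::comm_ring_1^'n^'n"
  assumes "A ** B = mat 1" "B ** A = mat 1"
  shows "matrix_inv A = B"
proof -
  have "invertible A" using assms unfolding invertible_def by blast
  have "matrix_inv A = matrix_inv A ** (A ** B)" using assms by simp
  also have "\<dots> = B"
    by (simp add: matrix_mul_assoc matrix_inv_left[OF \<open>invertible A\<close>])
  finally show ?thesis .
qed

lemma transpose_matrix_inv_symmetric:
  fixes H :: "real^'n::finite^'n"
  assumes "invertible H" "transpose H = H"
  shows "transpose (matrix_inv H) = matrix_inv H"
proof -
  have "H ** transpose (matrix_inv H) = mat 1" "transpose (matrix_inv H) ** H = mat 1"
    using arg_cong[OF matrix_inv_left[OF assms(1)], of transpose]
      arg_cong[OF matrix_inv_right[OF assms(1)], of transpose]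
    by (simp_all add: matrix_transpose_mul assms(2))
  then have "matrix_inv H = transpose (matrix_inv H)" by (rule matrix_inv_eqI)
  then show ?thesis by simp
qed

lemma mat_1_nth: "(mat 1 :: 'a::zero_neq_one^'n^'n) $ i $ j = (if i = j then 1 else 0)"
  by (simp add: mat_def)

lemma matrix_mult_eq_mat_1_nth:
  assumes "A ** B = mat 1"
  shows "(\<Sum>k\<in>UNIV. A $ i $ k * B $ k $ j) = (if i = j then 1 else (0::real))"
proof -
  have "(A ** B) $ i $ j = mat 1 $ i $ j" using assms by simp
  then show ?thesis by (simp add: matrix_matrix_mult_def mat_1_nth)
qed

lemma axis_1_nth: "axis i (1::real) $ j = (if j = i then 1 else 0)"
  by (simp add: axis_def)

lemma sum_if_eq_mult [simp]:
  "(\<Sum>m\<in>UNIV. (if l = m then a else 0) * X m) = a * X l"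
  "(\<Sum>m\<in>UNIV. X m * (if l = m then a else 0)) = X l * a"
  "(\<Sum>m\<in>UNIV. (if m = l then a else 0) * X m) = a * X l"
  "(\<Sum>m\<in>UNIV. X m * (if m = l then a else 0)) = X l * a"
  for X :: "'n::finite \<Rightarrow> real"
  by (simp_all add: if_distrib[of "\<lambda>x. x * _"] if_distrib[of "\<lambda>x. _ * x"] sum.delta sum.delta'
      cong: if_cong)

lemma if_0_mult:
  "(if P then a else 0) * b = (if P then a * b else (0::real))"
  "b * (if P then a else 0) = (if P then b * a else (0::real))"
  "- (if P then a else 0) = (if P then - a else (0::real))"
  by auto

lemma bil_sum: "bil A x y = (\<Sum>j\<in>UNIV. \<Sum>k\<in>UNIV. x $ j * A $ j $ k * y $ k)"
  by (simp add: bil_def inner_vec_def matrix_vector_mult_def sum_distrib_left mult.assoc)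

lemma bil_axis [simp]: "bil A (axis i 1) (axis j 1) = A $ i $ (j::'n::finite)"
  by (simp add: bil_sum axis_1_nth if_0_mult sum.delta sum.delta' cong: if_cong)

lemma bil_axis_left: "bil H (axis i 1) z = (H *v z) $ i"
  by (simp add: bil_def inner_axis')

lemma bil_scaleR_left: "bil H (c *\<^sub>R x) y = c * bil H x y"
  by (simp add: bil_def)

lemma bil_scaleR_right: "bil H x (c *\<^sub>R y) = c * bil H x y"
  by (simp add: bil_def matrix_vector_mult_scaleR)

lemma bil_zero_left [simp]: "bil H 0 z = 0"
  by (simp add: bil_def)

lemma bil_zero_right [simp]: "bil H z 0 = 0"
  by (simp add: bil_def)

lemma bil_minus_right: "bil H x (- y) = - bil H x y"
  by (simp add: bil_def inner_vec_def matrix_vector_mult_def sum_negf)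

lemma sum_if_const: "(\<Sum>x\<in>A. if P then f x else 0) = (if P then (\<Sum>x\<in>A. f x) else (0::real))"
  by simp

lemma sum_product_4:
  fixes p q :: "'n::finite \<Rightarrow> 'n \<Rightarrow> real"
  shows "(\<Sum>i\<in>UNIV. \<Sum>j\<in>UNIV. \<Sum>k\<in>UNIV. \<Sum>m\<in>UNIV. p j k * q i m)
       = (\<Sum>j\<in>UNIV. \<Sum>k\<in>UNIV. p j k) * (\<Sum>i\<in>UNIV. \<Sum>m\<in>UNIV. q i m)"
proof -
  have "(\<Sum>i\<in>UNIV. \<Sum>j\<in>UNIV. \<Sum>k\<in>UNIV. \<Sum>m\<in>UNIV. p j k * q i m)
      = (\<Sum>i\<in>UNIV. \<Sum>j\<in>UNIV. \<Sum>k\<in>UNIV. p j k * (\<Sum>m\<in>UNIV. q i m))"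
    by (simp add: sum_distrib_left)
  also have "\<dots> = (\<Sum>i\<in>UNIV. (\<Sum>j\<in>UNIV. \<Sum>k\<in>UNIV. p j k) * (\<Sum>m\<in>UNIV. q i m))"
    by (simp add: sum_distrib_right)
  also have "\<dots> = (\<Sum>j\<in>UNIV. \<Sum>k\<in>UNIV. p j k) * (\<Sum>i\<in>UNIV. \<Sum>m\<in>UNIV. q i m)"
    by (simp add: sum_distrib_left)
  finally show ?thesis .
qed

lemma bil_gram_eq_0_if_dependent:
  fixes x y :: "real^'n::finite"
  assumes "a *\<^sub>R x + b *\<^sub>R y = 0" "a \<noteq> 0 \<or> b \<noteq> 0"
  shows "bil H y y * bil H x x - bil H x y * bil H y x = 0"
proof (cases "a = 0")
  case True
  then have "y = 0" using assms by auto
  then show ?thesis by (simp add: bil_def)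
next
  case False
  have "a *\<^sub>R x = - (b *\<^sub>R y)" using assms(1) by (simp add: eq_neg_iff_add_eq_0)
  then have "x = (- b / a) *\<^sub>R y"
    using False by (metis scaleR_scaleR scaleR_minus_left scaleR_one divide_inverse mult.commute
        left_inverse)
  then show ?thesis by (simp only: bil_scaleR_left bil_scaleR_right) (simp add: algebra_simps)
qed

lemma sum_scaled_diff:
  fixes f a b :: "'a \<Rightarrow> 'b \<Rightarrow> real"
  shows "(\<Sum>i\<in>A. \<Sum>j\<in>B. f i j / T * (K * (a i j * s - b i j))) =
    K / T * (s * (\<Sum>i\<in>A. \<Sum>j\<in>B. f i j * a i j) - (\<Sum>i\<in>A. \<Sum>j\<in>B. f i j * b i j))"
proof -
  have "f i j / T * (K * (a i j * s - b i j)) = K / T * (s * (f i j * a i j)) - K / T * (f i j * b i j)"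
    for i j by (simp add: divide_inverse algebra_simps)
  then show ?thesis
    by (simp only: sum_subtractf sum_distrib_left[symmetric]) (simp only: right_diff_distrib)
qed

lemma sum_scaled_add:
  fixes f a b :: "'a \<Rightarrow> 'b \<Rightarrow> real"
  shows "(\<Sum>i\<in>A. \<Sum>j\<in>B. f i j / T * (K * (a i j * s + b i j))) =
    K / T * (s * (\<Sum>i\<in>A. \<Sum>j\<in>B. f i j * a i j) + (\<Sum>i\<in>A. \<Sum>j\<in>B. f i j * b i j))"
proof -
  have "f i j / T * (K * (a i j * s + b i j)) = K / T * (s * (f i j * a i j)) + K / T * (f i j * b i j)"
    for i j by (simp add: divide_inverse algebra_simps)
  then show ?thesis by (simp only: sum.distrib sum_distrib_left[symmetric]) (simp only: distrib_left)
qed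

lemma transpose_eq_nth:
  assumes "transpose A = A"
  shows "A $ i $ j = A $ j $ i"
proof -
  have "transpose A $ j $ i = A $ j $ i" using assms by simp
  then show ?thesis by (simp add: transpose_def)
qed

lemma contract_inverse_metric:
  fixes H M :: "real^'n::finite^'n"
  assumes "M ** H = mat 1" "transpose H = H"
  shows "(\<Sum>i\<in>UNIV. \<Sum>j\<in>UNIV. M $ i $ j * H $ i $ j) = real CARD('n)"
proof -
  note transpose_eq_nth[OF assms(2)]
  then show ?thesis using matrix_mult_eq_mat_1_nth[OF assms(1)] by simp
qed

lemma contract_inverse_trace:
  fixes H M A :: "real^'n::finite^'n"
  assumes "M ** H = mat 1" "transpose M = M"
  shows "(\<Sum>i\<in>UNIV. \<Sum>j\<in>UNIV. M $ i $ j * bil H (axis i 1) (A *v axis j 1)) = trace A"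
proof -
  note M_sym = transpose_eq_nth[OF assms(2)]
  have "bil H (axis i 1) (A *v axis j 1) = (H ** A) $ i $ j" for i j
    by (simp add: bil_axis_left matrix_vector_mul_assoc matrix_vector_mult_def axis_1_nth if_0_mult
        sum.delta sum.delta' matrix_matrix_mult_def cong: if_cong)
  then have "(\<Sum>i\<in>UNIV. \<Sum>j\<in>UNIV. M $ i $ j * bil H (axis i 1) (A *v axis j 1))
      = (\<Sum>j\<in>UNIV. \<Sum>i\<in>UNIV. M $ j $ i * (H ** A) $ i $ j)"
    by (subst sum.swap) (simp add: M_sym)
  also have "\<dots> = (\<Sum>j\<in>UNIV. ((M ** H) ** A) $ j $ j)"
    by (simp add: matrix_mul_assoc[symmetric]) (simp add: matrix_matrix_mult_def)
  finally show ?thesis using assms by (simp add: trace_def)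
qed

lemma contract_inverse_product:
  fixes H M A :: "real^'n::finite^'n"
  assumes "M ** H = mat 1" "transpose M = M"
  shows "(\<Sum>i\<in>UNIV. \<Sum>j\<in>UNIV. M $ i $ j * (bil H (axis i 1) z * bil H y (A *v axis j 1)))
    = bil H y (A *v z)"
proof -
  have right: "bil H y (A *v axis j 1) = ((y v* H) v* A) $ j" for j
    by (simp add: bil_def dot_lmul_matrix[symmetric] inner_axis)
  have "(\<Sum>i\<in>UNIV. \<Sum>j\<in>UNIV. M $ i $ j * (bil H (axis i 1) z * bil H y (A *v axis j 1)))
     = (H *v z) \<bullet> (M *v ((y v* H) v* A))"
    unfolding bil_axis_left right
    by (simp add: inner_vec_def matrix_vector_mult_def sum_distrib_left algebra_simps)
  also have "\<dots> = ((H *v z) v* M) \<bullet> ((y v* H) v* A)" by (simp add: dot_lmul_matrix)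
  also have "(H *v z) v* M = transpose M *v (H *v z)"
    by (metis transpose_transpose vector_transpose_matrix)
  also have "\<dots> = z" using assms by (simp add: matrix_vector_mul_assoc)
  also have "z \<bullet> ((y v* H) v* A) = bil H y (A *v z)"
    by (subst inner_commute) (simp add: bil_def dot_lmul_matrix)
  finally show ?thesis .
qed

lemma trace_eq_0_if_square_eq_neg_1:
  fixes J :: "real^2^2"
  assumes "J ** J = - mat 1"
  shows "trace J = 0"
proof -
  have JJ: "(J ** J) $ i $ k = - mat 1 $ i $ k" for i k using assms by simp
  have e11: "J$1$1 * J$1$1 + J$1$2 * J$2$1 = -1" and e12: "J$1$2 * (J$1$1 + J$2$2) = 0"
    using JJ[of 1 1] JJ[of 1 2] by (simp_all add: matrix_matrix_mult_def sum_2 mat_def algebra_simps)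
  have "J$1$1 + J$2$2 = 0"
  proof (rule ccontr)
    assume "J$1$1 + J$2$2 \<noteq> 0"
    then have "J$1$1 * J$1$1 = -1" using e11 e12 by simp
    moreover have "J$1$1 * J$1$1 \<ge> 0" by simp
    ultimately show False by linarith
  qed
  then show ?thesis by (simp add: trace_def sum_2)
qed

text \<open>The adjugate formula; it makes the entries of h^-1, hence the Christoffel symbols of a
  smooth metric on a 2-dimensional chart, visibly differentiable.\<close>

definition matrix_inv_2 :: "real^2^2 \<Rightarrow> real^2^2" where
  "matrix_inv_2 A = (\<chi> i j. (if i = 1 then (if j = 1 then A$2$2 else - A$1$2)
      else (if j = 1 then - A$2$1 else A$1$1)) / (A$1$1 * A$2$2 - A$1$2 * A$2$1))"

lemma matrix_inv_eq_matrix_inv_2: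
  fixes A :: "real^2^2"
  assumes "invertible A"
  shows "matrix_inv A = matrix_inv_2 A"
proof (rule matrix_inv_eqI)
  have d: "A$1$1 * A$2$2 - A$1$2 * A$2$1 \<noteq> 0"
    using assms invertible_det_nz det_2 by metis
  \<comment> \<open>the squared determinant, in the shape in which field_simps needs it to be nonzero\<close>
  have sq: "A$1$1 * (A$1$1 * (A$2$2 * A$2$2)) + A$1$2 * (A$1$2 * (A$2$1 * A$2$1))
      \<noteq> 2 * (A$1$1 * (A$1$2 * (A$2$1 * A$2$2)))"
  proof
    assume "A$1$1 * (A$1$1 * (A$2$2 * A$2$2)) + A$1$2 * (A$1$2 * (A$2$1 * A$2$1))
      = 2 * (A$1$1 * (A$1$2 * (A$2$1 * A$2$2)))"
    then have "(A$1$1 * A$2$2 - A$1$2 * A$2$1) * (A$1$1 * A$2$2 - A$1$2 * A$2$1) = 0"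
      by (simp add: algebra_simps)
    then show False using d by simp
  qed
  show "A ** matrix_inv_2 A = mat 1"
    using d by (simp add: vec_eq_iff forall_2 matrix_matrix_mult_def sum_2 matrix_inv_2_def
        mat_def field_simps sq)
  show "matrix_inv_2 A ** A = mat 1"
    using d by (simp add: vec_eq_iff forall_2 matrix_matrix_mult_def sum_2 matrix_inv_2_def
        mat_def field_simps sq)
qed

lemma differentiable_christoffel_2:
  fixes U :: "(real^2) set" and h :: "real^2 \<Rightarrow> real^2^2"
  assumes "open U" and smooth: "\<And>i j. smooth_fun U (\<lambda>x. h x $ i $ j)"
    and inv: "\<And>x. x \<in> U \<Longrightarrow> invertible (h x)" and "x \<in> U"
  shows "(\<lambda>y. christoffel h y l j k) differentiable (at x)"
proof -
  have dh: "(\<lambda>y. h y $ i $ j) differentiable (at x)"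
    and dpdh: "pd m (\<lambda>z. h z $ i $ j) differentiable (at x)" for m i j
  proof -
    have "iter_pd [] (\<lambda>x. h x $ i $ j) differentiable (at x)"
      and "iter_pd [m] (\<lambda>x. h x $ i $ j) differentiable (at x)"
      using smooth[of i j] \<open>x \<in> U\<close> unfolding smooth_fun_def by blast+
    then show "(\<lambda>y. h y $ i $ j) differentiable (at x)"
      and "pd m (\<lambda>z. h z $ i $ j) differentiable (at x)" by simp_all
  qed
  have "invertible (h x)" using inv \<open>x \<in> U\<close> .
  then have det: "h x $ 1 $ 1 * h x $ 2 $ 2 - h x $ 1 $ 2 * h x $ 2 $ 1 \<noteq> 0"
    using invertible_det_nz det_2 by metis
  have "(\<lambda>y. matrix_inv_2 (h y) $ a $ b) differentiable (at x)" for a b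
  proof -
    have "(\<lambda>y. if a = 1 then (if b = 1 then h y $ 2 $ 2 else - h y $ 1 $ 2)
        else (if b = 1 then - h y $ 2 $ 1 else h y $ 1 $ 1)) differentiable (at x)"
      by (cases "a = 1"; cases "b = 1") (auto intro!: dh differentiable_minus)
    then show ?thesis
      unfolding matrix_inv_2_def vec_lambda_beta
      by (intro differentiable_divide differentiable_diff differentiable_mult dh det)
  qed
  then have "(\<lambda>y. (\<Sum>m\<in>UNIV. matrix_inv_2 (h y) $ l $ m *
        (pd j (\<lambda>z. h z $ k $ m) y + pd k (\<lambda>z. h z $ j $ m) y - pd m (\<lambda>z. h z $ j $ k) y)) / 2)
      differentiable (at x)"
    by (intro differentiable_divide differentiable_sum ballI differentiable_mult differentiable_diff
        differentiable_add differentiable_const dpdh) auto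
  then show ?thesis
    by (rule differentiable_cong_open[OF \<open>open U\<close> \<open>x \<in> U\<close>, rotated])
      (simp add: christoffel_def matrix_inv_eq_matrix_inv_2 inv)
qed

section \<open>The cone chart\<close>

lemma sum_UNIV_unit_plus:
  "(\<Sum>a\<in>(UNIV::(unit+'n::finite) set). f a) = f (Inl ()) + (\<Sum>i\<in>UNIV. f (Inr i))"
proof -
  have "(\<Sum>a\<in>(UNIV::(unit+'n) set). f a) = (\<Sum>a\<in>UNIV. f (Inl a)) + (\<Sum>i\<in>UNIV. f (Inr i))"
    by (subst UNIV_Plus_UNIV[symmetric], subst sum.Plus) (auto simp: o_def)
  then show ?thesis by (simp add: UNIV_unit)
qed

lemma bounded_linear_cone_base: "bounded_linear (cone_base :: real^(unit+'n::finite) \<Rightarrow> real^'n)"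
proof -
  have "linear (cone_base :: real^(unit+'n::finite) \<Rightarrow> real^'n)"
    by (rule linearI) (auto simp: cone_base_def vec_eq_iff)
  then show ?thesis using linear_conv_bounded_linear by blast
qed

lemma bounded_linear_cone_t: "bounded_linear (cone_t :: real^(unit+'n::finite) \<Rightarrow> real)"
  unfolding cone_t_def by (rule bounded_linear_vec_nth)

lemma cone_base_axis [simp]:
  "cone_base (axis (Inl ()) 1 :: real^(unit+'n::finite)) = 0"
  "cone_base (axis (Inr i) 1 :: real^(unit+'n::finite)) = axis i 1"
  by (auto simp: cone_base_def axis_def vec_eq_iff)

lemma cone_t_axis [simp]:
  "cone_t (axis (Inl ()) 1 :: real^(unit+'n::finite)) = 1"
  "cone_t (axis (Inr i) 1 :: real^(unit+'n::finite)) = 0"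
  by (auto simp: cone_t_def axis_def)

lemma cone_base_cone_phi: "cone_base (cone_phi J P *v V) = J (cone_base P) *v cone_base V"
  by (simp add: vec_eq_iff cone_base_def cone_phi_def matrix_vector_mult_def sum_UNIV_unit_plus)

lemma differentiable_cone_t: "cone_t differentiable (at P)"
  using bounded_linear_cone_t bounded_linear_imp_differentiable by blast

lemma differentiable_compose_cone_base:
  "f differentiable (at (cone_base P)) \<Longrightarrow> (\<lambda>y. f (cone_base y)) differentiable (at P)"
  using differentiable_chain_at[of cone_base P f] bounded_linear_cone_base
    bounded_linear_imp_differentiable
  by (auto simp: o_def)

lemma pd_compose_cone_base:
  assumes "f differentiable (at (cone_base P))"
  shows "pd a (\<lambda>y. f (cone_base y)) P = (case a of Inl _ \<Rightarrow> 0 | Inr i \<Rightarrow> pd i f (cone_base P))"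
proof -
  let ?D = "frechet_derivative f (at (cone_base P))"
  have "((\<lambda>y. f (cone_base y)) has_derivative (\<lambda>v. ?D (cone_base v))) (at P)"
    using diff_chain_at[OF bounded_linear_imp_has_derivative[OF bounded_linear_cone_base]
        has_derivative_frechet_derivative[OF assms]]
    by (simp add: o_def)
  then have "pd a (\<lambda>y. f (cone_base y)) P = ?D (cone_base (axis a 1))"
    by (rule pd_eq_derivative)
  moreover have "?D 0 = 0"
    using has_derivative_frechet_derivative[OF assms] by (simp add: has_derivative_def linear_simps)
  ultimately show ?thesis by (cases a) (auto simp: pd_def)
qed

lemma pd_cone_t: "pd a cone_t P = (case a of Inl _ \<Rightarrow> 1 | Inr i \<Rightarrow> 0)"
  using pd_eq_derivative[OF bounded_linear_imp_has_derivative[OF bounded_linear_cone_t], of a P]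
  by (cases a) auto

lemma pd_cone_t_power2:
  "pd a (\<lambda>z. cone_t z ^ 2) P = (case a of Inl _ \<Rightarrow> 2 * cone_t P | Inr _ \<Rightarrow> 0)"
  using pd_mult[OF differentiable_cone_t differentiable_cone_t, of a]
  by (cases a) (auto simp: pd_cone_t power2_eq_square)

lemma pd_inverse_cone_t:
  assumes "cone_t P \<noteq> 0"
  shows "pd a (\<lambda>z. 1 / cone_t z) P = (case a of Inl _ \<Rightarrow> - 1 / cone_t P ^ 2 | Inr _ \<Rightarrow> 0)"
proof -
  have "((\<lambda>z. inverse (cone_t z)) has_derivative
      (\<lambda>v. - (inverse (cone_t P) * cone_t v * inverse (cone_t P)))) (at P)"
    by (rule Deriv.has_derivative_inverse[OF assms bounded_linear_imp_has_derivative[OF bounded_linear_cone_t]])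
  from pd_eq_derivative[OF this, of a] show ?thesis
    by (cases a) (auto simp: inverse_eq_divide power2_eq_square)
qed

lemma cone_metric_nth [simp]:
  "cone_metric h P $ Inl a $ Inl b = 1"
  "cone_metric h P $ Inl a $ Inr j = 0"
  "cone_metric h P $ Inr i $ Inl b = 0"
  "cone_metric h P $ Inr i $ Inr j = cone_t P ^ 2 * h (cone_base P) $ i $ j"
  by (simp_all add: cone_metric_def)

definition cone_metric_inv ::
  "(real^'n \<Rightarrow> real^'n^'n) \<Rightarrow> real^(unit + 'n::finite) \<Rightarrow> real^(unit + 'n)^(unit + 'n)" where
  "cone_metric_inv h P = (\<chi> a b. case (a, b) of
       (Inl _, Inl _) \<Rightarrow> 1
     | (Inr i, Inr j) \<Rightarrow> matrix_inv (h (cone_base P)) $ i $ j / (cone_t P)^2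
     | _ \<Rightarrow> 0)"

lemma cone_metric_inv_nth [simp]:
  "cone_metric_inv h P $ Inl a $ Inl b = 1"
  "cone_metric_inv h P $ Inl a $ Inr j = 0"
  "cone_metric_inv h P $ Inr i $ Inl b = 0"
  "cone_metric_inv h P $ Inr i $ Inr j = matrix_inv (h (cone_base P)) $ i $ j / cone_t P ^ 2"
  by (simp_all add: cone_metric_inv_def)

lemma sum_cone_metric_inv:
  "(\<Sum>a\<in>UNIV. \<Sum>b\<in>UNIV. cone_metric_inv h P $ a $ b * f a b) = f (Inl ()) (Inl ()) +
      (\<Sum>i\<in>UNIV. \<Sum>j\<in>UNIV. matrix_inv (h (cone_base P)) $ i $ j / cone_t P ^ 2 * f (Inr i) (Inr j))"
  by (simp add: sum_UNIV_unit_plus)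

lemma matrix_inv_cone_metric:
  assumes "cone_t P \<noteq> 0" "invertible (h (cone_base P))"
  shows "matrix_inv (cone_metric h P) = cone_metric_inv h P"
proof (rule matrix_inv_eqI)
  let ?H = "h (cone_base P)"
  note right = matrix_mult_eq_mat_1_nth[OF matrix_inv_right[OF assms(2)]]
  note left = matrix_mult_eq_mat_1_nth[OF matrix_inv_left[OF assms(2)]]
  have "(\<Sum>k\<in>UNIV. cone_t P ^ 2 * ?H $ i $ k * (matrix_inv ?H $ k $ j / cone_t P ^ 2))
      = (\<Sum>k\<in>UNIV. ?H $ i $ k * matrix_inv ?H $ k $ j)"
    and "(\<Sum>k\<in>UNIV. matrix_inv ?H $ i $ k / cone_t P ^ 2 * (cone_t P ^ 2 * ?H $ k $ j))
      = (\<Sum>k\<in>UNIV. matrix_inv ?H $ i $ k * ?H $ k $ j)" for i j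
    using assms(1) by (auto intro!: sum.cong)
  then show "cone_metric h P ** cone_metric_inv h P = mat 1"
    and "cone_metric_inv h P ** cone_metric h P = mat 1"
    unfolding vec_eq_iff
    by (intro allI, case_tac i; case_tac ia;
        simp add: matrix_matrix_mult_def sum_UNIV_unit_plus mat_1_nth right left)+
qed

definition cone_christoffel ::
  "(real^'n \<Rightarrow> real^'n^'n) \<Rightarrow> unit+'n::finite \<Rightarrow> unit+'n \<Rightarrow> unit+'n \<Rightarrow> real^(unit+'n) \<Rightarrow> real" where
  "cone_christoffel h a b c y = (case a of
      Inl _ \<Rightarrow> (case (b,c) of (Inr j, Inr k) \<Rightarrow> - cone_t y * h (cone_base y) $ j $ k | _ \<Rightarrow> 0)
    | Inr l \<Rightarrow> (case (b,c) of
         (Inl _, Inr k) \<Rightarrow> (if l = k then 1 / cone_t y else 0)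
       | (Inr k, Inl _) \<Rightarrow> (if l = k then 1 / cone_t y else 0)
       | (Inr j, Inr k) \<Rightarrow> christoffel h (cone_base y) l j k
       | _ \<Rightarrow> 0))"

lemma cone_christoffel_simps [simp]:
  "cone_christoffel h (Inl a) (Inr j) (Inr k) y = - cone_t y * h (cone_base y) $ j $ k"
  "cone_christoffel h (Inl a) (Inl b) c y = 0"
  "cone_christoffel h (Inl a) bb (Inl c') y = 0"
  "cone_christoffel h (Inr l) (Inl b) (Inr k) y = (if l = k then 1 / cone_t y else 0)"
  "cone_christoffel h (Inr l) (Inr k) (Inl b) y = (if l = k then 1 / cone_t y else 0)"
  "cone_christoffel h (Inr l) (Inr j) (Inr k) y = christoffel h (cone_base y) l j k"
  "cone_christoffel h (Inr l) (Inl b) (Inl c') y = 0"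
  by (simp_all add: cone_christoffel_def split: sum.splits)

section \<open>Curvature of the cone over a chart\<close>

locale cone_chart =
  fixes U :: "(real^'n::finite) set" and h :: "real^'n \<Rightarrow> real^'n^'n"
  assumes open_U: "open U"
    and differentiable_h: "\<And>i j x. x \<in> U \<Longrightarrow> (\<lambda>y. h y $ i $ j) differentiable (at x)"
    and h_sym: "\<And>x i j. x \<in> U \<Longrightarrow> h x $ i $ j = h x $ j $ i"
    and invertible_h: "\<And>x. x \<in> U \<Longrightarrow> invertible (h x)"
    and differentiable_christoffel:
      "\<And>l j k x. x \<in> U \<Longrightarrow> (\<lambda>y. christoffel h y l j k) differentiable (at x)"
begin

lemma open_cone_domain: "open (cone_domain U)"
proof -
  have "cone_domain U = {P. 0 < cone_t P} \<inter> cone_base -` U"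
    by (auto simp: cone_domain_def)
  moreover have "open {P::real^(unit+'n). 0 < cone_t P}"
    by (rule open_Collect_less) (auto intro: continuous_intros simp: cone_t_def)
  moreover have "open (cone_base -` U :: (real^(unit+'n)) set)"
    using open_U by (intro open_vimage linear_continuous_on bounded_linear_cone_base)
  ultimately show ?thesis by auto
qed

lemma cone_domainD:
  assumes "P \<in> cone_domain U"
  shows "cone_t P > 0" "cone_base P \<in> U"
  using assms by (auto simp: cone_domain_def)

lemma transpose_h: "x \<in> U \<Longrightarrow> transpose (h x) = h x"
  by (simp add: transpose_def vec_eq_iff h_sym)

lemma matrix_inv_h:
  assumes "x \<in> U"
  shows "matrix_inv (h x) ** h x = mat 1" "transpose (matrix_inv (h x)) = matrix_inv (h x)"
  using assms matrix_inv_left invertible_h transpose_matrix_inv_symmetric transpose_h by blast+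

lemma matrix_inv_cone_metric_at:
  "P \<in> cone_domain U \<Longrightarrow> matrix_inv (cone_metric h P) = cone_metric_inv h P"
  using matrix_inv_cone_metric cone_domainD invertible_h by force

lemma pd_h_sym: "u \<in> U \<Longrightarrow> pd x (\<lambda>v. h v $ a $ b) u = pd x (\<lambda>v. h v $ b $ a) u"
  by (rule pd_cong_open[OF open_U]) (auto simp: h_sym)

lemma christoffel_sym: "u \<in> U \<Longrightarrow> christoffel h u l j k = christoffel h u l k j"
  unfolding christoffel_def by (simp add: pd_h_sym[of u _ j k] h_sym[of u j k] add.commute)

lemma christoffel_lowered:
  assumes "u \<in> U"
  shows "(\<Sum>m\<in>UNIV. h u $ i $ m * christoffel h u m j k)
     = (pd j (\<lambda>v. h v $ k $ i) u + pd k (\<lambda>v. h v $ j $ i) u - pd i (\<lambda>v. h v $ j $ k) u) / 2"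
proof -
  define S where "S l = pd j (\<lambda>v. h v $ k $ l) u + pd k (\<lambda>v. h v $ j $ l) u - pd l (\<lambda>v. h v $ j $ k) u"
    for l
  have "(\<Sum>m\<in>UNIV. h u $ i $ m * christoffel h u m j k)
      = (\<Sum>m\<in>UNIV. \<Sum>l\<in>UNIV. h u $ i $ m * matrix_inv (h u) $ m $ l * S l) / 2"
    unfolding christoffel_def S_def by (simp add: sum_divide_distrib sum_distrib_left mult.assoc)
  also have "\<dots> = (\<Sum>l\<in>UNIV. (\<Sum>m\<in>UNIV. h u $ i $ m * matrix_inv (h u) $ m $ l) * S l) / 2"
    by (subst sum.swap) (simp add: sum_distrib_right)
  also have "\<dots> = S i / 2"
    by (simp add: matrix_mult_eq_mat_1_nth[OF matrix_inv_right[OF invertible_h[OF assms]]])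
  finally show ?thesis by (simp add: S_def)
qed

lemma pd_cone_metric_tangent:
  assumes "y \<in> cone_domain U"
  shows "pd c (\<lambda>z. cone_t z ^ 2 * h (cone_base z) $ i $ j) y =
     (case c of Inl _ \<Rightarrow> 2 * cone_t y * h (cone_base y) $ i $ j
       | Inr k \<Rightarrow> cone_t y ^ 2 * pd k (\<lambda>u. h u $ i $ j) (cone_base y))"
proof -
  have d: "(\<lambda>u. h u $ i $ j) differentiable (at (cone_base y))"
    using differentiable_h cone_domainD[OF assms] by blast
  have "pd c (\<lambda>z. cone_t z ^ 2 * h (cone_base z) $ i $ j) y
      = cone_t y ^ 2 * pd c (\<lambda>z. h (cone_base z) $ i $ j) y
        + pd c (\<lambda>z. cone_t z ^ 2) y * h (cone_base y) $ i $ j"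
    by (rule pd_mult) (auto intro!: differentiable_compose_cone_base[OF d, simplified]
        differentiable_power differentiable_cone_t)
  then show ?thesis using pd_compose_cone_base[OF d, of c] pd_cone_t_power2[of c y]
    by (cases c) auto
qed

lemma christoffel_cone_metric:
  assumes y: "y \<in> cone_domain U"
  shows "christoffel (cone_metric h) y a b c = cone_christoffel h a b c y"
proof -
  have t: "cone_t y > 0" and u: "cone_base y \<in> U" using cone_domainD[OF y] by auto
  let ?H = "h (cone_base y)"
  note simps = christoffel_def matrix_inv_cone_metric_at[OF y] sum_UNIV_unit_plus
    pd_cone_metric_tangent[OF y]
  have left: "(\<Sum>m\<in>UNIV. matrix_inv ?H $ l $ m * ?H $ m $ k) = (if l = k then 1 else 0)" for l k
    using matrix_mult_eq_mat_1_nth[OF matrix_inv_left[OF invertible_h[OF u]]] .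
  have mixed: "(\<Sum>m\<in>UNIV. matrix_inv ?H $ l $ m * (2 * cone_t y * ?H $ k $ m) / cone_t y ^ 2)
      = (if l = k then 2 / cone_t y else 0)" for l k
  proof -
    have "(\<Sum>m\<in>UNIV. matrix_inv ?H $ l $ m * (2 * cone_t y * ?H $ k $ m) / cone_t y ^ 2)
        = 2 / cone_t y * (\<Sum>m\<in>UNIV. matrix_inv ?H $ l $ m * ?H $ m $ k)"
      unfolding sum_distrib_left using t
      by (intro sum.cong) (simp_all add: h_sym[OF u, of k] power2_eq_square field_simps)
    then show ?thesis by (simp add: left)
  qed
  show ?thesis
    using t by (cases a; cases b; cases c)
      (auto simp: simps mixed ring_distribs[symmetric] split: sum.split)
qed

lemma pd_christoffel_cone_metric:
  assumes "P \<in> cone_domain U"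
  shows "pd a (\<lambda>y. christoffel (cone_metric h) y d b c) P = pd a (cone_christoffel h d b c) P"
  by (rule pd_cong_open[OF open_cone_domain assms]) (rule christoffel_cone_metric)

definition cone_christoffel_pd :: "unit+'n \<Rightarrow> unit+'n \<Rightarrow> unit+'n \<Rightarrow> unit+'n \<Rightarrow> real^(unit+'n) \<Rightarrow> real"
  where
  "cone_christoffel_pd d b c a P = (case d of
    Inl _ \<Rightarrow> (case (b,c) of (Inr j, Inr k) \<Rightarrow> (case a of Inl _ \<Rightarrow> - h (cone_base P) $ j $ k
               | Inr i \<Rightarrow> - cone_t P * pd i (\<lambda>v. h v $ j $ k) (cone_base P)) | _ \<Rightarrow> 0)
  | Inr l \<Rightarrow> (case (b,c) of
       (Inl _, Inr k) \<Rightarrow> (if l = k then (case a of Inl _ \<Rightarrow> - 1 / cone_t P ^ 2 | Inr _ \<Rightarrow> 0) else 0)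
     | (Inr k, Inl _) \<Rightarrow> (if l = k then (case a of Inl _ \<Rightarrow> - 1 / cone_t P ^ 2 | Inr _ \<Rightarrow> 0) else 0)
     | (Inr j, Inr k) \<Rightarrow> (case a of Inl _ \<Rightarrow> 0 | Inr i \<Rightarrow> pd i (\<lambda>v. christoffel h v l j k) (cone_base P))
     | _ \<Rightarrow> 0))"

lemma pd_cone_christoffel_vertical:
  assumes "P \<in> cone_domain U"
  shows "pd a (cone_christoffel h (Inl ()) (Inr j) (Inr k)) P
    = cone_christoffel_pd (Inl ()) (Inr j) (Inr k) a P"
proof -
  have dh: "(\<lambda>v. h v $ j $ k) differentiable (at (cone_base P))"
    using differentiable_h cone_domainD[OF assms] by blast
  then have d: "(\<lambda>y. h (cone_base y) $ j $ k) differentiable (at P)"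
    using differentiable_compose_cone_base by blast
  have "pd a (\<lambda>y. - (cone_t y * h (cone_base y) $ j $ k)) P
      = - (cone_t P * pd a (\<lambda>y. h (cone_base y) $ j $ k) P + pd a cone_t P * h (cone_base P) $ j $ k)"
    using pd_mult[OF differentiable_cone_t d, of a] differentiable_cone_t d
    by (subst pd_minus) (auto intro!: differentiable_mult)
  then show ?thesis using pd_compose_cone_base[OF dh, of a]
    by (cases a) (auto simp: cone_christoffel_pd_def cone_christoffel_def[abs_def] pd_cone_t)
qed

lemma pd_cone_christoffel:
  assumes P: "P \<in> cone_domain U"
  shows "pd a (cone_christoffel h d b c) P = cone_christoffel_pd d b c a P"
proof -
  have t: "cone_t P \<noteq> 0" and u: "cone_base P \<in> U" using cone_domainD[OF P] by auto
  have zero: "cone_christoffel h d b c = (\<lambda>y. 0)"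
    if "d = Inl ()" "\<not> (\<exists>j k. b = Inr j \<and> c = Inr k)"
    using that by (cases b; cases c) auto
  have tangent: "pd a (\<lambda>y. christoffel h (cone_base y) l j k) P
      = cone_christoffel_pd (Inr l) (Inr j) (Inr k) a P" for l j k
    using pd_compose_cone_base[OF differentiable_christoffel[OF u], of a l j k]
    by (cases a) (auto simp: cone_christoffel_pd_def)
  show ?thesis
  proof (cases d)
    case (Inl d')
    then show ?thesis using zero pd_cone_christoffel_vertical[OF P]
      by (cases b; cases c) (auto simp: cone_christoffel_pd_def)
  next
    case (Inr l)
    then show ?thesis using tangent pd_inverse_cone_t[OF t, of a]
      by (cases a; cases b; cases c) (auto simp: cone_christoffel_pd_def cone_christoffel_def[abs_def])
  qed
qed

lemma curv_comp_cone_metric_eq: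
  assumes P: "P \<in> cone_domain U"
  shows "curv_comp (cone_metric h) P a b c d = cone_christoffel_pd d b c a P - cone_christoffel_pd d a c b P
     + (\<Sum>m\<in>UNIV. cone_christoffel h d a m P * cone_christoffel h m b c P
                 - cone_christoffel h d b m P * cone_christoffel h m a c P)"
  unfolding curv_comp_def
  by (simp only: pd_christoffel_cone_metric[OF P] christoffel_cone_metric[OF P] pd_cone_christoffel[OF P])

lemma curv_comp_cone_metric:
  assumes P: "P \<in> cone_domain U"
  shows "curv_comp (cone_metric h) P a b c d = (case (a,b,c,d) of
     (Inr i, Inr j, Inr k, Inr l) \<Rightarrow> curv_comp h (cone_base P) i j k l
         - (if l = i then h (cone_base P) $ j $ k else 0) + (if l = j then h (cone_base P) $ i $ k else 0)
   | _ \<Rightarrow> 0)"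
proof -
  have t: "cone_t P > 0" and u: "cone_base P \<in> U" using cone_domainD[OF P] by auto
  let ?H = "h (cone_base P)"
  note lowered = christoffel_lowered[OF u]
  have pd_sym: "pd x (\<lambda>v. h v $ i $ j) (cone_base P) = pd x (\<lambda>v. h v $ j $ i) (cone_base P)" for x i j
    using pd_h_sym[OF u] .
  have lowered_scaled: "(\<Sum>m\<in>UNIV. c * ?H $ i $ m * christoffel h (cone_base P) m j k) = c *
     ((pd j (\<lambda>v. h v $ k $ i) (cone_base P) + pd k (\<lambda>v. h v $ j $ i) (cone_base P)
       - pd i (\<lambda>v. h v $ j $ k) (cone_base P)) / 2)" for c i j k
    using lowered[of i j k] by (simp add: sum_distrib_left[symmetric] mult.assoc)
  have lowered': "(\<Sum>m\<in>UNIV. christoffel h (cone_base P) m j k * ?H $ i $ m) =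
     (pd j (\<lambda>v. h v $ k $ i) (cone_base P) + pd k (\<lambda>v. h v $ j $ i) (cone_base P)
       - pd i (\<lambda>v. h v $ j $ k) (cone_base P)) / 2" for i j k
    using lowered[of i j k] by (simp add: mult.commute)
  text \<open>The vanishing of R^t_ijk: the connection of h is compatible with h.\<close>
  have compatible: "cone_t P * pd j (\<lambda>v. h v $ i $ k) (cone_base P) - cone_t P * pd i (\<lambda>v. h v $ j $ k) (cone_base P)
     + (\<Sum>m\<in>UNIV. cone_t P * ?H $ j $ m * christoffel h (cone_base P) m i k
         - cone_t P * ?H $ i $ m * christoffel h (cone_base P) m j k) = 0" for i j k
    by (simp add: sum_subtractf lowered_scaled) (simp add: pd_sym field_simps)
  show ?thesis unfolding curv_comp_cone_metric_eq[OF P]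
    apply (cases a; cases b; cases c; cases d)
    using t apply (simp_all add: cone_christoffel_pd_def sum_UNIV_unit_plus if_0_mult sum.delta sum.delta'
        curv_comp_def christoffel_sym[OF u] power2_eq_square sum_subtractf lowered_scaled compatible)
    apply (simp_all add: h_sym[OF u] pd_sym algebra_simps)
    apply (simp add: sum_negf sum_distrib_left[symmetric] lowered' pd_sym field_simps)
    done
qed

end

section \<open>Cone over a chart of constant sectional curvature\<close>

definition base_metric ::
  "(real^'n \<Rightarrow> real^'n^'n) \<Rightarrow> real^(unit+'n::finite) \<Rightarrow> real^(unit+'n) \<Rightarrow> real^(unit+'n) \<Rightarrow> real" where
  "base_metric h P X Y = bil (h (cone_base P)) (cone_base X) (cone_base Y)"

lemma curv4_axis: "curv4 g x (axis i 1) (axis j 1) (axis k 1) (axis m 1)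
   = (\<Sum>l\<in>UNIV. curv_comp g x i j k l * g x $ l $ m)"
  by (simp add: curv4_def axis_1_nth if_0_mult sum_if_const sum.delta sum.delta' cong: if_cong)

lemma cone_base_dependent_if_xi_in_span:
  fixes X Y :: "real^(unit+'n::finite)"
  assumes "cone_xi \<in> span {X, Y}"
  obtains a b where "a *\<^sub>R cone_base X + b *\<^sub>R cone_base Y = 0" "a \<noteq> 0 \<or> b \<noteq> 0"
proof -
  obtain a b where xi: "cone_xi = a *\<^sub>R X + b *\<^sub>R Y"
    using assms by (auto simp: span_breakdown_eq span_singleton algebra_simps)
  have "a *\<^sub>R cone_base X + b *\<^sub>R cone_base Y = cone_base (cone_xi :: real^(unit+'n))"
    unfolding xi by (simp add: cone_base_def vec_eq_iff)
  moreover have "a * cone_t X + b * cone_t Y = cone_t (cone_xi :: real^(unit+'n))"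
    unfolding xi by (simp add: cone_t_def)
  ultimately show ?thesis using that by (fastforce simp: cone_xi_def)
qed

locale cone_chart_const_curv = cone_chart U h for U :: "(real^'n::finite) set" and h +
  fixes k' :: real
  assumes const_curv: "const_sect_curv U h k'"
begin

lemma curv_comp_lowered_cone_metric:
  assumes P: "P \<in> cone_domain U"
  shows "(\<Sum>d\<in>UNIV. curv_comp (cone_metric h) P a b c d * cone_metric h P $ d $ e) =
    (case (a,b,c,e) of (Inr i, Inr j, Inr k, Inr m) \<Rightarrow>
       cone_t P ^ 2 * (k' - 1) * (h (cone_base P) $ j $ k * h (cone_base P) $ i $ m
           - h (cone_base P) $ i $ k * h (cone_base P) $ j $ m)
     | _ \<Rightarrow> 0)"
proof -
  have u: "cone_base P \<in> U" using cone_domainD[OF P] by auto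
  let ?H = "h (cone_base P)"
  have const: "(\<Sum>l\<in>UNIV. curv_comp h (cone_base P) i j k l * ?H $ l $ m)
      = k' * (?H $ j $ k * ?H $ i $ m - ?H $ i $ k * ?H $ j $ m)" for i j k m
    using const_curv u unfolding const_sect_curv_def curv4_axis[symmetric] by simp
  have base: "(\<Sum>l\<in>UNIV. curv_comp h (cone_base P) i j k l * (c * ?H $ l $ m))
      = c * (k' * (?H $ j $ k * ?H $ i $ m - ?H $ i $ k * ?H $ j $ m))" for c i j k m
  proof -
    have "(\<Sum>l\<in>UNIV. curv_comp h (cone_base P) i j k l * (c * ?H $ l $ m))
        = c * (\<Sum>l\<in>UNIV. curv_comp h (cone_base P) i j k l * ?H $ l $ m)"
      by (simp add: sum_distrib_left algebra_simps)
    then show ?thesis using const[of i j k m] by simp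
  qed
  show ?thesis
    apply (cases a; cases b; cases c; cases e)
    apply (simp_all add: sum_UNIV_unit_plus curv_comp_cone_metric[OF P])
    apply (simp add: ring_distribs sum.distrib sum_subtractf if_0_mult sum.delta' sum.delta base)
    done
qed

lemma curv4_cone_metric:
  assumes P: "P \<in> cone_domain U"
  shows "curv4 (cone_metric h) P X Y Z W =
     cone_t P ^ 2 * (k' - 1) * (base_metric h P Y Z * base_metric h P X W - base_metric h P X Z * base_metric h P Y W)"
proof -
  let ?L = "\<lambda>a b c e. (\<Sum>d\<in>UNIV. curv_comp (cone_metric h) P a b c d * cone_metric h P $ d $ e)"
  let ?H = "h (cone_base P)"
  let ?c = "cone_t P ^ 2 * (k' - 1)"
  have inner: "(\<Sum>l\<in>UNIV. \<Sum>m\<in>UNIV. X $ a * Y $ b * Z $ c * W $ m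
        * curv_comp (cone_metric h) P a b c l * cone_metric h P $ l $ m)
     = (\<Sum>e\<in>UNIV. X $ a * Y $ b * Z $ c * W $ e * ?L a b c e)" for a b c
    by (subst sum.swap) (simp add: sum_distrib_left algebra_simps)
  have "curv4 (cone_metric h) P X Y Z W = (\<Sum>a\<in>UNIV. \<Sum>b\<in>UNIV. \<Sum>c\<in>UNIV. \<Sum>e\<in>UNIV.
          X $ a * Y $ b * Z $ c * W $ e * ?L a b c e)"
    unfolding curv4_def by (simp only: inner)
  also have "\<dots> = (\<Sum>i\<in>UNIV. \<Sum>j\<in>UNIV. \<Sum>k\<in>UNIV. \<Sum>m\<in>UNIV.
          X $ Inr i * Y $ Inr j * Z $ Inr k * W $ Inr m
            * (?c * (?H $ j $ k * ?H $ i $ m - ?H $ i $ k * ?H $ j $ m)))"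
    by (simp add: curv_comp_lowered_cone_metric[OF P] sum_UNIV_unit_plus)
  also have "\<dots> = ?c * ((\<Sum>i\<in>UNIV. \<Sum>j\<in>UNIV. \<Sum>k\<in>UNIV. \<Sum>m\<in>UNIV.
          (Y $ Inr j * ?H $ j $ k * Z $ Inr k) * (X $ Inr i * ?H $ i $ m * W $ Inr m))
        - (\<Sum>j\<in>UNIV. \<Sum>i\<in>UNIV. \<Sum>k\<in>UNIV. \<Sum>m\<in>UNIV.
          (X $ Inr i * ?H $ i $ k * Z $ Inr k) * (Y $ Inr j * ?H $ j $ m * W $ Inr m)))"
    by (subst (2) sum.swap) (simp add: sum_distrib_left sum_subtractf[symmetric] algebra_simps)
  also have "\<dots> = ?c * (base_metric h P Y Z * base_metric h P X W - base_metric h P X Z * base_metric h P Y W)"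
    unfolding sum_product_4 base_metric_def bil_sum by (simp add: cone_base_def)
  finally show ?thesis .
qed

lemma curv4_cone_metric_xi_section:
  assumes "P \<in> cone_domain U" "cone_xi \<in> span {X, Y}"
  shows "curv4 (cone_metric h) P X Y Y X = 0"
proof -
  obtain a b where "a *\<^sub>R cone_base X + b *\<^sub>R cone_base Y = 0" "a \<noteq> 0 \<or> b \<noteq> 0"
    using cone_base_dependent_if_xi_in_span[OF assms(2)] .
  from bil_gram_eq_0_if_dependent[OF this, of "h (cone_base P)"] show ?thesis
    unfolding curv4_cone_metric[OF assms(1)] base_metric_def by simp
qed

lemma rho_cone_metric:
  assumes P: "P \<in> cone_domain U"
  shows "rho (cone_metric h) P Y Z = (k' - 1) * (real CARD('n) - 1) * base_metric h P Y Z"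
proof -
  have t: "cone_t P > 0" and u: "cone_base P \<in> U" using cone_domainD[OF P] by auto
  let ?H = "h (cone_base P)" let ?M = "matrix_inv ?H"
  note inv = matrix_inv_h[OF u]
  have "rho (cone_metric h) P Y Z =
     (\<Sum>i\<in>UNIV. \<Sum>j\<in>UNIV. ?M $ i $ j / cone_t P ^ 2 * (cone_t P ^ 2 * (k' - 1) *
        (bil ?H (axis i 1) (axis j 1) * base_metric h P Y Z
         - bil ?H (axis i 1) (cone_base Z) * bil ?H (cone_base Y) (mat 1 *v axis j 1))))"
    unfolding rho_def matrix_inv_cone_metric_at[OF P] using t
    by (simp add: sum_UNIV_unit_plus curv4_cone_metric[OF P] base_metric_def algebra_simps)
  also have "\<dots> = (k' - 1) * (base_metric h P Y Z * (\<Sum>i\<in>UNIV. \<Sum>j\<in>UNIV. ?M $ i $ j * ?H $ i $ j)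
     - (\<Sum>i\<in>UNIV. \<Sum>j\<in>UNIV. ?M $ i $ j * (bil ?H (axis i 1) (cone_base Z) * bil ?H (cone_base Y) (mat 1 *v axis j 1))))"
    using t by (simp only: sum_scaled_diff bil_axis) simp
  also have "\<dots> = (k' - 1) * (real CARD('n) - 1) * base_metric h P Y Z"
    by (simp only: contract_inverse_metric[OF inv(1) transpose_h[OF u]] contract_inverse_product[OF inv])
      (simp add: base_metric_def algebra_simps)
  finally show ?thesis .
qed

lemma rho_star_cone_metric:
  assumes P: "P \<in> cone_domain U"
  shows "rho_star (cone_metric h) (cone_phi J) P Y Z = (k' - 1) *
     (trace (J (cone_base P)) * base_metric h P Y Z
      - bil (h (cone_base P)) (cone_base Y) (J (cone_base P) *v cone_base Z))"
proof -
  have t: "cone_t P > 0" and u: "cone_base P \<in> U" using cone_domainD[OF P] by auto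
  let ?H = "h (cone_base P)" let ?M = "matrix_inv ?H" let ?J = "J (cone_base P)"
  note inv = matrix_inv_h[OF u]
  have "rho_star (cone_metric h) (cone_phi J) P Y Z =
     (\<Sum>i\<in>UNIV. \<Sum>j\<in>UNIV. ?M $ i $ j / cone_t P ^ 2 * (cone_t P ^ 2 * (k' - 1) *
        (bil ?H (axis i 1) (?J *v axis j 1) * base_metric h P Y Z
         - bil ?H (axis i 1) (cone_base Z) * bil ?H (cone_base Y) (?J *v axis j 1))))"
    unfolding rho_star_def matrix_inv_cone_metric_at[OF P] using t
    by (simp add: sum_UNIV_unit_plus curv4_cone_metric[OF P] base_metric_def cone_base_cone_phi
        algebra_simps)
  also have "\<dots> = (k' - 1) * (base_metric h P Y Z * (\<Sum>i\<in>UNIV. \<Sum>j\<in>UNIV. ?M $ i $ j * bil ?H (axis i 1) (?J *v axis j 1))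
     - (\<Sum>i\<in>UNIV. \<Sum>j\<in>UNIV. ?M $ i $ j * (bil ?H (axis i 1) (cone_base Z) * bil ?H (cone_base Y) (?J *v axis j 1))))"
    using t by (simp only: sum_scaled_diff) simp
  also have "\<dots> = (k' - 1) * (trace ?J * base_metric h P Y Z - bil ?H (cone_base Y) (?J *v cone_base Z))"
    by (simp only: contract_inverse_trace[OF inv] contract_inverse_product[OF inv]) (simp add: mult.commute)
  finally show ?thesis .
qed

lemma tau_cone_metric:
  assumes P: "P \<in> cone_domain U"
  shows "tau (cone_metric h) P = (k' - 1) * (real CARD('n) - 1) * real CARD('n) / cone_t P ^ 2"
proof -
  have u: "cone_base P \<in> U" using cone_domainD[OF P] by auto
  let ?H = "h (cone_base P)" let ?M = "matrix_inv ?H"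
  have "tau (cone_metric h) P = (\<Sum>i\<in>UNIV. \<Sum>j\<in>UNIV. ?M $ i $ j / cone_t P ^ 2 *
      ((k' - 1) * (real CARD('n) - 1) * ?H $ i $ j))"
    unfolding tau_def matrix_inv_cone_metric_at[OF P] sum_cone_metric_inv
    by (simp add: rho_cone_metric[OF P] base_metric_def)
  also have "\<dots> = (k' - 1) * (real CARD('n) - 1) / cone_t P ^ 2
      * (\<Sum>i\<in>UNIV. \<Sum>j\<in>UNIV. ?M $ i $ j * ?H $ i $ j)"
    unfolding sum_distrib_left by (intro sum.cong refl) simp
  finally show ?thesis
    by (simp add: contract_inverse_metric[OF matrix_inv_h(1)[OF u] transpose_h[OF u]])
qed

lemma tau_star_cone_metric:
  assumes P: "P \<in> cone_domain U"
  shows "tau_star (cone_metric h) (cone_phi J) P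
    = (k' - 1) * (real CARD('n) - 1) * trace (J (cone_base P)) / cone_t P ^ 2"
proof -
  have u: "cone_base P \<in> U" using cone_domainD[OF P] by auto
  let ?H = "h (cone_base P)" let ?M = "matrix_inv ?H" let ?J = "J (cone_base P)"
  note inv = matrix_inv_h[OF u]
  have "tau_star (cone_metric h) (cone_phi J) P = (\<Sum>i\<in>UNIV. \<Sum>j\<in>UNIV. ?M $ i $ j / cone_t P ^ 2 *
      ((k' - 1) * (?H $ i $ j * trace ?J - bil ?H (axis i 1) (?J *v axis j 1))))"
    unfolding tau_star_def matrix_inv_cone_metric_at[OF P] sum_cone_metric_inv
    by (simp add: rho_star_cone_metric[OF P] base_metric_def mult.commute)
  also have "\<dots> = (k' - 1) / cone_t P ^ 2 *
      (trace ?J * (\<Sum>i\<in>UNIV. \<Sum>j\<in>UNIV. ?M $ i $ j * ?H $ i $ j)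
       - (\<Sum>i\<in>UNIV. \<Sum>j\<in>UNIV. ?M $ i $ j * bil ?H (axis i 1) (?J *v axis j 1)))"
    by (rule sum_scaled_diff)
  also have "\<dots> = (k' - 1) / cone_t P ^ 2 * (trace ?J * real CARD('n) - trace ?J)"
    by (simp only: contract_inverse_metric[OF inv(1) transpose_h[OF u]] contract_inverse_trace[OF inv])
  finally have "tau_star (cone_metric h) (cone_phi J) P
    = (k' - 1) / cone_t P ^ 2 * (trace ?J * real CARD('n) - trace ?J)" .
  then show ?thesis by (simp add: divide_inverse algebra_simps)
qed

lemma tau_star_star_cone_metric:
  assumes P: "P \<in> cone_domain U" and JJ: "J (cone_base P) ** J (cone_base P) = - mat 1"
  shows "tau_star_star (cone_metric h) (cone_phi J) P
    = (k' - 1) * (trace (J (cone_base P)) ^ 2 + real CARD('n)) / cone_t P ^ 2"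
proof -
  have u: "cone_base P \<in> U" using cone_domainD[OF P] by auto
  let ?H = "h (cone_base P)" let ?M = "matrix_inv ?H" let ?J = "J (cone_base P)"
  note inv = matrix_inv_h[OF u]
  have "(- mat 1) *v x = - (mat 1 *v x)" for x :: "real^'n"
    by (simp add: vec_eq_iff matrix_vector_mult_def sum_negf)
  then have "?J *v (?J *v x) = - x" for x
    using JJ by (simp add: matrix_vector_mul_assoc)
  then have "tau_star_star (cone_metric h) (cone_phi J) P = (\<Sum>i\<in>UNIV. \<Sum>j\<in>UNIV. ?M $ i $ j / cone_t P ^ 2 *
      ((k' - 1) * (bil ?H (axis i 1) (?J *v axis j 1) * trace ?J + ?H $ i $ j)))"
    unfolding tau_star_star_def matrix_inv_cone_metric_at[OF P] sum_cone_metric_inv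
    by (simp add: rho_star_cone_metric[OF P] base_metric_def cone_base_cone_phi bil_minus_right
        mult.commute)
  also have "\<dots> = (k' - 1) / cone_t P ^ 2 *
      (trace ?J * (\<Sum>i\<in>UNIV. \<Sum>j\<in>UNIV. ?M $ i $ j * bil ?H (axis i 1) (?J *v axis j 1))
       + (\<Sum>i\<in>UNIV. \<Sum>j\<in>UNIV. ?M $ i $ j * ?H $ i $ j))"
    by (rule sum_scaled_add)
  also have "\<dots> = (k' - 1) / cone_t P ^ 2 * (trace ?J * trace ?J + real CARD('n))"
    by (simp only: contract_inverse_metric[OF inv(1) transpose_h[OF u]] contract_inverse_trace[OF inv])
  finally show ?thesis by (simp add: power2_eq_square)
qed

end

theorem proposition3p5:
  fixes U :: "(real^2) set"
    and J h :: "real^2 \<Rightarrow> real^2^2"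
    and k' :: real
  assumes "almost_norden_chart U J h"
    and "const_sect_curv U h k'"
  shows "\<forall>P\<in>cone_domain U.
     (\<forall>X Y. bil (cone_metric h P) X Y = 0
        \<longrightarrow> bil (cone_metric h P) X X * bil (cone_metric h P) Y Y \<noteq> 0
        \<longrightarrow> cone_xi \<in> span {X, Y}
        \<longrightarrow> curv4 (cone_metric h) P X Y Y X
              / (bil (cone_metric h P) X X * bil (cone_metric h P) Y Y) = 0)
     \<and> tau_star (cone_metric h) (cone_phi J) P = 0
     \<and> tau_star_star (cone_metric h) (cone_phi J) P = tau (cone_metric h) P"
proof -
  have "open U" and smooth: "\<And>i j. smooth_fun U (\<lambda>x. h x $ i $ j)"
    and sym: "\<And>x. x \<in> U \<Longrightarrow> transpose (h x) = h x" and inv: "\<And>x. x \<in> U \<Longrightarrow> invertible (h x)"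
    and JJ: "\<And>x. x \<in> U \<Longrightarrow> J x ** J x = - mat 1"
    using assms(1) unfolding almost_norden_chart_def by blast+
  interpret cone_chart_const_curv U h k'
  proof
    show "(\<lambda>y. h y $ i $ j) differentiable (at x)" if "x \<in> U" for i j x
    proof -
      have "iter_pd [] (\<lambda>x. h x $ i $ j) differentiable (at x)"
        using smooth[of i j] that unfolding smooth_fun_def by blast
      then show ?thesis by simp
    qed
    show "h x $ i $ j = h x $ j $ i" if "x \<in> U" for x i j
      using transpose_eq_nth[OF sym[OF that]] .
    show "(\<lambda>y. christoffel h y l j k) differentiable (at x)" if "x \<in> U" for l j k x
      by (rule differentiable_christoffel_2[OF \<open>open U\<close> smooth inv that])
  qed (fact \<open>open U\<close> inv assms(2))+
  show ?thesis
  proof (intro ballI conjI allI impI)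
    fix P assume P: "P \<in> cone_domain U"
    have JJ_P: "J (cone_base P) ** J (cone_base P) = - mat 1"
      using JJ cone_domainD(2)[OF P] .
    then have trace: "trace (J (cone_base P)) = 0" by (rule trace_eq_0_if_square_eq_neg_1)
    show "tau_star (cone_metric h) (cone_phi J) P = 0"
      by (simp add: tau_star_cone_metric[OF P] trace)
    show "tau_star_star (cone_metric h) (cone_phi J) P = tau (cone_metric h) P"
      by (simp add: tau_star_star_cone_metric[of P J, OF P JJ_P] tau_cone_metric[OF P] trace)
    fix X Y :: "real^(unit+2)"
    assume "cone_xi \<in> span {X, Y}"
    then show "curv4 (cone_metric h) P X Y Y X
        / (bil (cone_metric h P) X X * bil (cone_metric h P) Y Y) = 0"
      by (simp add: curv4_cone_metric_xi_section[OF P])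
  qed
qed

end
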